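(* For the Grover walk on $\mathbb{T}_\kappa$ ($\kappa\ge3$) started from $\Psi_0=\sum_j\varphi_j|e,\epsilon_j\rangle$, let $W_t$ denote its position at time $t$, i.e. $P(W_t=g)=\sum_{\epsilon\in\Sigma}|\langle g,\epsilon|U^t\Psi_0\rangle|^2$. If $\varphi=\varphi^{U}$ let $X_t$ be the walk on $\mathbb{Z}_+$ with wall defined below with $\gamma=0$, and if $\varphi=\varphi^{WU}$ let $X_t$ be that walk with $\gamma=\pi$. Then for all $t\ge0$ and all $x\in\mathbb{Z}_+$, $P(|W_t|=x)=P(X_t=x)$.
   Context: Fix $\kappa\ge3$. Let $\Sigma=\{\epsilon_0,\dots,\epsilon_{\kappa-1}\}$, $G$ the group generated by $\Sigma$ with relations $\epsilon_i^2=e$; the Cayley tree $\mathbb{T}_\kappa$ has vertices the reduced words in $G$ (root $e$), with $g\sim h$ iff $gh^{-1}\in\Sigma$; $|g|$ is the word length. The Grover walk acts on the Hilbert space with orthonormal basis $\{|g,\epsilon\rangle\}$ by $U|g,\epsilon\rangle=\sum_{\tau\in\Sigma}(-\delta_{\epsilon\tau}+2/\kappa)|\tau g,\tau\rangle$. Initial coin states: $\varphi^{U}$ with $\varphi_j=1/\sqrt\kappa$; $\varphi^{WU}$ with $\varphi_j=\omega_\kappa^{\,j}/\sqrt\kappa$, $\omega_\kappa=e^{2\pi i/\kappa}$. Walk with wall on $\mathbb{Z}_+=\{0,1,2,\dots\}$: let $a_\kappa=2\sqrt{\kappa-1}/\kappa$, $b_\kappa=1-2/\kappa$, $\gamma\in\mathbb{R}$.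 Consider the Hilbert space with orthonormal basis $\{|0,L\rangle\}\cup\{|x,L\rangle,|x,R\rangle: x\ge1\}$ and the unitary $\widetilde U$ given by $\widetilde U|0,L\rangle=e^{i\gamma}|1,R\rangle$ and, for $x\ge1$, $\widetilde U|x,L\rangle=a_\kappa|x-1,L\rangle+b_\kappa|x+1,R\rangle$, $\widetilde U|x,R\rangle=-b_\kappa|x-1,L\rangle+a_\kappa|x+1,R\rangle$. (Equivalently: coin $H_\kappa=\begin{bmatrix}a_\kappa&-b_\kappa\\ b_\kappa&a_\kappa\end{bmatrix}$ in the ordered basis $(|L\rangle,|R\rangle)$ at $x\ge1$, coin $e^{i\gamma}\begin{bmatrix}0&1\\1&0\end{bmatrix}$ at $x=0$, followed by the shift $|x,R\rangle\mapsto|x+1,R\rangle$, $|x,L\rangle\mapsto|x-1,L\rangle$.) With $\Phi_t=\widetilde U^t|0,L\rangle$, the random variable $X_t$ on $\mathbb{Z}_+$ has $P(X_t=0)=|\langle 0,L|\Phi_t\rangle|^2$ and $P(X_t=x)=|\langle x,L|\Phi_t\rangle|^2+|\langle x,R|\Phi_t\rangle|^2$ for $x\ge1$. *)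

theory Defs
  imports Complex_Main
begin

text \<open>Vertices of T_kappa: reduced words over the letters 0..kappa-1 (letter j stands for
  epsilon_j), i.e. lists with all letters < kappa and no two equal adjacent letters.
  The empty list is the root e.\<close>

fun reduced :: "nat list \<Rightarrow> bool" where
  "reduced [] = True"
| "reduced [a] = True"
| "reduced (a # b # w) = (a \<noteq> b \<and> reduced (b # w))"

definition tree_vertex :: "nat \<Rightarrow> nat list \<Rightarrow> bool" where
  "tree_vertex \<kappa> g \<longleftrightarrow> set g \<subseteq> {..<\<kappa>} \<and> reduced g"

fun lmul :: "nat \<Rightarrow> nat list \<Rightarrow> nat list" where
  "lmul \<tau> [] = [\<tau>]"
| "lmul \<tau> (a # w) = (if a = \<tau> then w else \<tau> # a # w)"

text \<open>States: amplitude functions psi(g, epsilon) = <g,epsilon|psi>.\<close>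
type_synonym tree_state = "nat list \<times> nat \<Rightarrow> complex"

definition grover_coef :: "nat \<Rightarrow> nat \<Rightarrow> nat \<Rightarrow> complex" where
  "grover_coef \<kappa> \<epsilon> \<tau> = (if \<epsilon> = \<tau> then -1 else 0) + 2 / of_nat \<kappa>"

text \<open>U|g,eps> = sum_tau (-delta_{eps tau} + 2/kappa) |tau g, tau>; hence
  <h,tau|U psi> = sum_eps (-delta_{eps tau} + 2/kappa) <tau h, eps|psi>, since tau g = h iff g = tau h.\<close>
definition grover_step :: "nat \<Rightarrow> tree_state \<Rightarrow> tree_state" where
  "grover_step \<kappa> \<psi> = (\<lambda>(h, \<tau>).
     if tree_vertex \<kappa> h \<and> \<tau> < \<kappa>
     then (\<Sum>\<epsilon><\<kappa>. grover_coef \<kappa> \<epsilon> \<tau> * \<psi> (lmul \<tau> h, \<epsilon>))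
     else 0)"

definition grover_init :: "nat \<Rightarrow> (nat \<Rightarrow> complex) \<Rightarrow> tree_state" where
  "grover_init \<kappa> \<phi> = (\<lambda>(g, \<epsilon>). if g = [] \<and> \<epsilon> < \<kappa> then \<phi> \<epsilon> else 0)"

definition grover_state :: "nat \<Rightarrow> (nat \<Rightarrow> complex) \<Rightarrow> nat \<Rightarrow> tree_state" where
  "grover_state \<kappa> \<phi> t = (grover_step \<kappa> ^^ t) (grover_init \<kappa> \<phi>)"

definition tree_dist_prob :: "nat \<Rightarrow> (nat \<Rightarrow> complex) \<Rightarrow> nat \<Rightarrow> nat \<Rightarrow> real" where
  "tree_dist_prob \<kappa> \<phi> t x =
     (\<Sum>g\<in>{g. tree_vertex \<kappa> g \<and> length g = x}.
        \<Sum>\<epsilon><\<kappa>. (cmod (grover_state \<kappa> \<phi> t (g, \<epsilon>)))\<^sup>2)"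

definition phiU :: "nat \<Rightarrow> nat \<Rightarrow> complex" where
  "phiU \<kappa> j = 1 / of_real (sqrt (real \<kappa>))"

definition phiWU :: "nat \<Rightarrow> nat \<Rightarrow> complex" where
  "phiWU \<kappa> j = cis (2 * pi / real \<kappa>) ^ j / of_real (sqrt (real \<kappa>))"

text \<open>States: amplitude functions on nat \<times> bool; (x, False) = |x,L>, (x, True) = |x,R>.
  The basis vector |0,R> does not exist; its amplitude is kept at 0.\<close>
type_synonym line_state = "nat \<times> bool \<Rightarrow> complex"

definition a_k :: "nat \<Rightarrow> real" where "a_k \<kappa> = 2 * sqrt (real \<kappa> - 1) / real \<kappa>"
definition b_k :: "nat \<Rightarrow> real" where "b_k \<kappa> = 1 - 2 / real \<kappa>"

definition wall_step :: "nat \<Rightarrow> real \<Rightarrow> line_state \<Rightarrow> line_state" where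
  "wall_step \<kappa> \<gamma> \<psi> = (\<lambda>(y, r).
     if \<not> r then of_real (a_k \<kappa>) * \<psi> (y + 1, False) - of_real (b_k \<kappa>) * \<psi> (y + 1, True)
     else if y = 0 then 0
     else if y = 1 then cis \<gamma> * \<psi> (0, False)
     else of_real (b_k \<kappa>) * \<psi> (y - 1, False) + of_real (a_k \<kappa>) * \<psi> (y - 1, True))"

definition wall_state :: "nat \<Rightarrow> real \<Rightarrow> nat \<Rightarrow> line_state" where
  "wall_state \<kappa> \<gamma> t = (wall_step \<kappa> \<gamma> ^^ t) (\<lambda>(y, r). if y = 0 \<and> \<not> r then 1 else 0)"

definition wall_prob :: "nat \<Rightarrow> real \<Rightarrow> nat \<Rightarrow> nat \<Rightarrow> real" where
  "wall_prob \<kappa> \<gamma> t x =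
     (if x = 0 then (cmod (wall_state \<kappa> \<gamma> t (0, False)))\<^sup>2
      else (cmod (wall_state \<kappa> \<gamma> t (x, False)))\<^sup>2 + (cmod (wall_state \<kappa> \<gamma> t (x, True)))\<^sup>2)"

end

theory Submission imports Defs begin

(* The Grover walk on the tree started at the root with a coin vector phi is
   "radial": at every time its amplitudes are obtained from the amplitudes of the walk with a
   wall on Z_+ by an explicit lifting.  For a reduced word g of length n and a coin e, the
   amplitude <g,e|psi> is phi(last (e#g)) times
     W(n,R) / r^(n-1)   if e is the first letter of g (the arc pointing back to the root),
     W(n,L) / r^n       otherwise (an arc pointing away from the root),
   where W is the wall state and r = sqrt(kappa - 1).  The key lemma
   grover_step_lift_to_tree says that lifting intertwines one Grover step with one wall step,
   provided phi is an eigenvector of the Grover coin with eigenvalue e^{i gamma}; this holds for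
   phiU with gamma = 0 and for phiWU with gamma = pi.  By induction the tree state at time t is
   the lift of the wall state at time t.  Finally, a sphere of radius n >= 1 has
   kappa (kappa-1)^(n-1) vertices and |phi j|^2 = 1/kappa, so summing the squared lifted
   amplitudes over the sphere gives back exactly the wall probabilities. *)

lemma tree_vertex_Cons:
  "tree_vertex k (a # w) \<longleftrightarrow> a < k \<and> tree_vertex k w \<and> (w = [] \<or> hd w \<noteq> a)"
  unfolding tree_vertex_def by (cases w) auto

lemma tree_vertex_lmul: "tree_vertex k h \<Longrightarrow> \<tau> < k \<Longrightarrow> tree_vertex k (lmul \<tau> h)"
  by (cases h) (auto simp: tree_vertex_Cons)

definition sphere :: "nat \<Rightarrow> nat \<Rightarrow> nat list set" where
  "sphere k n = {g. tree_vertex k g \<and> length g = n}"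

lemma finite_sphere: "finite (sphere k n)"
  by (rule finite_subset[OF _ finite_lists_length_eq[OF finite_lessThan[of k], of n]])
     (auto simp: sphere_def tree_vertex_def)

lemma sphere_Suc_Suc:
  "sphere k (Suc (Suc n)) = (\<lambda>(g, a). a # g) ` Sigma (sphere k (Suc n)) (\<lambda>g. {..<k} - {hd g})"
proof (intro equalityI subsetI)
  fix g assume "g \<in> sphere k (Suc (Suc n))"
  then obtain a w where "g = a # w" "tree_vertex k (a # w)" "length w = Suc n"
    by (auto simp: sphere_def length_Suc_conv)
  then show "g \<in> (\<lambda>(g, a). a # g) ` Sigma (sphere k (Suc n)) (\<lambda>g. {..<k} - {hd g})"
    by (auto simp: sphere_def tree_vertex_Cons image_iff intro!: bexI[of _ "(w, a)"])
qed (auto simp: sphere_def tree_vertex_Cons)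

lemma card_sphere_Suc: "card (sphere k (Suc n)) = k * (k - 1) ^ n"
proof (induction n)
  case 0
  have "sphere k (Suc 0) = (\<lambda>a. [a]) ` {..<k}"
    by (auto simp: sphere_def tree_vertex_def length_Suc_conv)
  then show ?case by (simp add: card_image inj_on_def)
next
  case (Suc n)
  have hd_less: "hd g < k" if "g \<in> sphere k (Suc n)" for g
    using that by (cases g) (auto simp: sphere_def tree_vertex_Cons)
  have "card (sphere k (Suc (Suc n))) = card (Sigma (sphere k (Suc n)) (\<lambda>g. {..<k} - {hd g}))"
    unfolding sphere_Suc_Suc by (rule card_image) (auto simp: inj_on_def)
  also have "\<dots> = (\<Sum>g\<in>sphere k (Suc n). card ({..<k} - {hd g}))"
    by (rule card_SigmaI) (auto simp: finite_sphere)
  also have "\<dots> = (\<Sum>g\<in>sphere k (Suc n). k - 1)"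
    by (intro sum.cong) (auto simp: hd_less)
  also have "\<dots> = k * (k - 1) ^ Suc n" using Suc by simp
  finally show ?case .
qed

lemma sum_if_eq_const:
  fixes A B :: "'a::comm_ring_1"
  assumes "j < k"
  shows "(\<Sum>e<k. if e = j then A else B) = A + of_nat (k - 1) * B"
proof -
  have "(\<Sum>e<k. if e = j then A else B) = (\<Sum>e\<in>{..<k}-{j}. B) + A"
    using assms by (subst sum.remove[of _ j]) (auto intro!: sum.cong)
  then show ?thesis using assms by simp
qed

lemma grover_coef_sum:
  assumes "\<tau> < k"
  shows "(\<Sum>e<k. grover_coef k e \<tau> * f e) = - f \<tau> + 2 / of_nat k * (\<Sum>e<k. f e)"
proof -
  have "grover_coef k e \<tau> * f e = (if e = \<tau> then - f e else 0) + 2 / of_nat k * f e" for e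
    unfolding grover_coef_def by (simp add: algebra_simps)
  then show ?thesis using assms by (simp add: sum.distrib sum_distrib_left)
qed

text \<open>The coin applied to a vector taking one value at a distinguished coin j and another
  value elsewhere; this is the shape of every lifted state seen from a vertex.\<close>
lemma grover_coef_sum_two_valued:
  fixes A B c :: complex
  assumes "\<tau> < k" "j < k"
  shows "(\<Sum>e<k. grover_coef k e \<tau> * (c * (if e = j then A else B))) =
    c * (- (if \<tau> = j then A else B) + 2 / of_nat k * (A + (of_nat k - 1) * B))"
proof -
  have factor: "- (c * X) + 2 / of_nat k * (c * Y) = c * (- X + 2 / of_nat k * Y)" for X Y :: complex
    by (simp add: algebra_simps)
  have "(\<Sum>e<k. c * (if e = j then A else B)) = c * (\<Sum>e<k. if e = j then A else B)"
    by (simp add: sum_distrib_left)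
  also have "\<dots> = c * (A + (of_nat k - 1) * B)"
    using assms(2) by (simp add: sum_if_eq_const of_nat_diff)
  finally show ?thesis
    using grover_coef_sum[OF assms(1), where f = "\<lambda>e. c * (if e = j then A else B)"]
    by (simp only: factor)
qed

lemma phiU_coin_eigen:
  assumes "\<tau> < k"
  shows "(\<Sum>e<k. grover_coef k e \<tau> * phiU k e) = cis 0 * phiU k \<tau>"
proof -
  have "(\<Sum>e<k. phiU k e) = of_nat k * phiU k \<tau>" by (simp add: phiU_def)
  then show ?thesis using assms by (simp add: grover_coef_sum)
qed

lemma sum_roots_of_unity:
  assumes "k \<ge> 3"
  shows "(\<Sum>j<k. cis (2 * pi / real k) ^ j) = 0"
proof -
  have "cis (2 * pi / real k) ^ k = 1" using assms by (simp add: DeMoivre)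
  moreover have "cis (2 * pi / real k) \<noteq> 1"
  proof
    assume "cis (2 * pi / real k) = 1"
    then have "sin (2 * pi / real k) = 0" by (metis cis.sel(2) one_complex.sel(2))
    moreover have "sin (2 * pi / real k) > 0"
      using assms by (intro sin_gt_zero) (auto simp: field_simps)
    ultimately show False by simp
  qed
  ultimately show ?thesis by (simp add: sum_gp_strict)
qed

lemma phiWU_coin_eigen:
  assumes "k \<ge> 3" "\<tau> < k"
  shows "(\<Sum>e<k. grover_coef k e \<tau> * phiWU k e) = cis pi * phiWU k \<tau>"
proof -
  have "(\<Sum>e<k. phiWU k e) = (\<Sum>j<k. cis (2 * pi / real k) ^ j) / of_real (sqrt (real k))"
    by (simp add: phiWU_def sum_divide_distrib)
  then have "(\<Sum>e<k. phiWU k e) = 0" using sum_roots_of_unity[OF assms(1)] by simp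
  then show ?thesis using assms by (simp add: grover_coef_sum)
qed

lemma phiU_norm: "(cmod (phiU k j))\<^sup>2 = 1 / real k"
  by (simp add: phiU_def norm_divide power_divide)

lemma phiWU_norm: "(cmod (phiWU k j))\<^sup>2 = 1 / real k"
  by (simp add: phiWU_def norm_divide power_divide norm_power)

text \<open>r = sqrt(kappa - 1): each vertex other than the root has kappa - 1 children, so radial
  amplitudes decay by the factor 1/r per generation.\<close>
definition branch_root :: "nat \<Rightarrow> real" where
  "branch_root k = sqrt (real k - 1)"

text \<open>The radial lift of a wall state W: see the opening comment.  The factor
  phi(last (e # g)) is the coin chosen at the first step away from the root.\<close>
definition lift_to_tree :: "nat \<Rightarrow> (nat \<Rightarrow> complex) \<Rightarrow> line_state \<Rightarrow> tree_state" where
  "lift_to_tree k \<phi> W = (\<lambda>(g, e). if tree_vertex k g \<and> e < k then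
      \<phi> (last (e # g)) *
      (if g \<noteq> [] \<and> e = hd g then W (length g, True) / of_real (branch_root k) ^ (length g - 1)
       else W (length g, False) / of_real (branch_root k) ^ length g)
     else 0)"

lemma lift_to_tree_init: "grover_init k \<phi> = lift_to_tree k \<phi> (wall_state k \<gamma> 0)"
  by (auto simp: grover_init_def lift_to_tree_def wall_state_def tree_vertex_def fun_eq_iff)

lemma lift_to_tree_Cons:
  assumes "tree_vertex k (a # w)" "e < k"
  shows "lift_to_tree k \<phi> W (a # w, e) = \<phi> (last (a # w)) *
    (if e = a then W (Suc (length w), True) / of_real (branch_root k) ^ length w
     else W (Suc (length w), False) / of_real (branch_root k) ^ Suc (length w))"
  using assms by (simp add: lift_to_tree_def del: power_Suc)

context
  fixes k :: nat
  assumes k3: "k \<ge> 3"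
begin

private abbreviation R :: complex where "R \<equiv> of_real (branch_root k)"

lemma branch_root_sq: "R * R = of_nat k - 1"
proof -
  have "branch_root k * branch_root k = real k - 1" using k3 by (simp add: branch_root_def)
  then show ?thesis by (metis of_real_diff of_real_mult of_real_of_nat_eq of_real_1)
qed

lemma of_nat_eq_branch_root: "of_nat k = 1 + R * R"
  using branch_root_sq by simp

lemma branch_root_nonzero: "R \<noteq> 0"
  using k3 by (simp add: branch_root_def)

lemma a_k_eq: "of_real (a_k k) = 2 * R / of_nat k"
  by (simp add: a_k_def branch_root_def)

lemma b_k_eq: "of_real (b_k k) = 1 - 2 / (of_nat k :: complex)"
  by (simp add: b_k_def)

text \<open>The two scalar identities behind the intertwining: the coin applied to the lifted state
  at a vertex reproduces the wall coin H_kappa, for arcs pointing away from the root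
  (outward) and towards it (inward).\<close>
lemma coin_outward:
  fixes A B :: complex
  shows "- (B / R ^ n) + 2 / of_nat k * (B / R ^ n + (of_nat k - 1) * (A / R ^ Suc n)) =
    (of_real (a_k k) * A - of_real (b_k k) * B) / R ^ n"
proof -
  have "(of_nat k - 1) * (A / R ^ Suc n) = R * A / R ^ n"
    using branch_root_nonzero by (simp add: branch_root_sq[symmetric] field_simps)
  then show ?thesis
    using k3 branch_root_nonzero
    by (simp add: a_k_eq b_k_eq field_simps) (simp add: of_nat_eq_branch_root algebra_simps)
qed

lemma coin_inward:
  fixes A B :: complex
  shows "- (A / R ^ Suc n) + 2 / of_nat k * (B / R ^ n + (of_nat k - 1) * (A / R ^ Suc n)) =
    (of_real (b_k k) * A + of_real (a_k k) * B) / R ^ Suc n"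
proof -
  have "B / R ^ n = R * B / R ^ Suc n"
    using branch_root_nonzero by (simp add: field_simps)
  then show ?thesis
    using k3 branch_root_nonzero by (simp add: a_k_eq b_k_eq field_simps)
qed

lemma grover_step_lift_outward:
  assumes hv: "tree_vertex k h" and tk: "\<tau> < k" and out: "h = [] \<or> hd h \<noteq> \<tau>"
  shows "grover_step k (lift_to_tree k \<phi> W) (h, \<tau>) = lift_to_tree k \<phi> (wall_step k \<gamma> W) (h, \<tau>)"
proof -
  have lmul: "lmul \<tau> h = \<tau> # h" using out by (cases h) auto
  have v: "tree_vertex k (\<tau> # h)" using tree_vertex_lmul[OF hv tk] by (simp add: lmul)
  have "grover_step k (lift_to_tree k \<phi> W) (h, \<tau>) =
      (\<Sum>e<k. grover_coef k e \<tau> * (\<phi> (last (\<tau> # h)) *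
        (if e = \<tau> then W (Suc (length h), True) / R ^ length h
         else W (Suc (length h), False) / R ^ Suc (length h))))"
    using hv tk v by (simp add: grover_step_def lmul lift_to_tree_Cons del: power_Suc)
  also have "\<dots> = \<phi> (last (\<tau> # h)) * (- (W (Suc (length h), True) / R ^ length h) +
      2 / of_nat k * (W (Suc (length h), True) / R ^ length h +
        (of_nat k - 1) * (W (Suc (length h), False) / R ^ Suc (length h))))"
    by (subst grover_coef_sum_two_valued[OF tk tk]) simp
  also have "\<dots> = \<phi> (last (\<tau> # h)) * ((of_real (a_k k) * W (Suc (length h), False)
      - of_real (b_k k) * W (Suc (length h), True)) / R ^ length h)"
    by (simp only: coin_outward)
  finally show ?thesis
    using hv tk out by (auto simp: lift_to_tree_def wall_step_def)
qed

lemma grover_step_lift_wall: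
  assumes tk: "\<tau> < k"
    and eigen: "(\<Sum>e<k. grover_coef k e \<tau> * \<phi> e) = cis \<gamma> * \<phi> \<tau>"
  shows "grover_step k (lift_to_tree k \<phi> W) ([\<tau>], \<tau>) = lift_to_tree k \<phi> (wall_step k \<gamma> W) ([\<tau>], \<tau>)"
proof -
  have "grover_step k (lift_to_tree k \<phi> W) ([\<tau>], \<tau>) =
      (\<Sum>e<k. grover_coef k e \<tau> * (\<phi> e * W (0, False)))"
    using tk by (simp add: grover_step_def tree_vertex_def lift_to_tree_def)
  also have "\<dots> = (\<Sum>e<k. grover_coef k e \<tau> * \<phi> e) * W (0, False)"
    by (simp add: sum_distrib_right mult.assoc)
  finally show ?thesis
    using tk by (simp add: eigen lift_to_tree_def tree_vertex_def wall_step_def)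
qed

lemma grover_step_lift_inward:
  assumes hv: "tree_vertex k (\<tau> # d # w)"
  shows "grover_step k (lift_to_tree k \<phi> W) (\<tau> # d # w, \<tau>) =
    lift_to_tree k \<phi> (wall_step k \<gamma> W) (\<tau> # d # w, \<tau>)"
proof -
  have tk: "\<tau> < k" and dk: "d < k" and dt: "\<tau> \<noteq> d" and v: "tree_vertex k (d # w)"
    using hv by (auto simp: tree_vertex_Cons)
  have "grover_step k (lift_to_tree k \<phi> W) (\<tau> # d # w, \<tau>) =
      (\<Sum>e<k. grover_coef k e \<tau> * (\<phi> (last (d # w)) *
        (if e = d then W (Suc (length w), True) / R ^ length w
         else W (Suc (length w), False) / R ^ Suc (length w))))"
    using hv tk v by (simp add: grover_step_def lift_to_tree_Cons del: power_Suc)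
  also have "\<dots> = \<phi> (last (d # w)) * (- (W (Suc (length w), False) / R ^ Suc (length w)) +
      2 / of_nat k * (W (Suc (length w), True) / R ^ length w +
        (of_nat k - 1) * (W (Suc (length w), False) / R ^ Suc (length w))))"
    using dt by (subst grover_coef_sum_two_valued[OF tk dk]) simp
  also have "\<dots> = \<phi> (last (d # w)) * ((of_real (b_k k) * W (Suc (length w), False)
      + of_real (a_k k) * W (Suc (length w), True)) / R ^ Suc (length w))"
    by (simp only: coin_inward)
  finally show ?thesis
    using hv tk by (simp add: lift_to_tree_def wall_step_def)
qed

lemma grover_step_lift_to_tree:
  assumes eigen: "\<And>\<tau>. \<tau> < k \<Longrightarrow> (\<Sum>e<k. grover_coef k e \<tau> * \<phi> e) = cis \<gamma> * \<phi> \<tau>"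
  shows "grover_step k (lift_to_tree k \<phi> W) = lift_to_tree k \<phi> (wall_step k \<gamma> W)"
proof (rule ext, clarify)
  fix h \<tau>
  show "grover_step k (lift_to_tree k \<phi> W) (h, \<tau>) = lift_to_tree k \<phi> (wall_step k \<gamma> W) (h, \<tau>)"
  proof (cases "tree_vertex k h \<and> \<tau> < k")
    case False
    then show ?thesis by (auto simp: grover_step_def lift_to_tree_def)
  next
    case True
    then have hv: "tree_vertex k h" and tk: "\<tau> < k" by auto
    show ?thesis
    proof (cases "h = [] \<or> hd h \<noteq> \<tau>")
      case True
      then show ?thesis by (rule grover_step_lift_outward[OF hv tk])
    next
      case False
      then obtain w where h: "h = \<tau> # w" by (cases h) auto
      show ?thesis
      proof (cases w)
        case Nil
        then show ?thesis using h grover_step_lift_wall[OF tk eigen[OF tk]] by (simp only:)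
      next
        case (Cons d w')
        then show ?thesis using h hv grover_step_lift_inward by (simp only:)
      qed
    qed
  qed
qed

lemma grover_state_eq_lift:
  assumes eigen: "\<And>\<tau>. \<tau> < k \<Longrightarrow> (\<Sum>e<k. grover_coef k e \<tau> * \<phi> e) = cis \<gamma> * \<phi> \<tau>"
  shows "grover_state k \<phi> t = lift_to_tree k \<phi> (wall_state k \<gamma> t)"
proof (induction t)
  case 0
  show ?case by (simp add: grover_state_def lift_to_tree_init)
next
  case (Suc t)
  then show ?case
    by (simp add: grover_state_def wall_state_def grover_step_lift_to_tree[OF eigen])
qed

lemma lift_norm_at_vertex:
  assumes gv: "tree_vertex k g" and lg: "length g = Suc n"
    and nphi: "\<And>j. (cmod (\<phi> j))\<^sup>2 = 1 / real k"
  shows "(\<Sum>e<k. (cmod (lift_to_tree k \<phi> W (g, e)))\<^sup>2) =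
    ((cmod (W (Suc n, True)))\<^sup>2 + (cmod (W (Suc n, False)))\<^sup>2) / (real k * (real k - 1) ^ n)"
proof -
  obtain c w where g: "g = c # w" and lw: "length w = n" using lg by (cases g) auto
  have ck: "c < k" using gv g by (simp add: tree_vertex_Cons)
  have nR: "(cmod (R ^ m))\<^sup>2 = (real k - 1) ^ m" for m
  proof -
    have "(cmod (R ^ m))\<^sup>2 = ((cmod R)\<^sup>2) ^ m"
      by (metis norm_power power_mult mult.commute)
    also have "(cmod R)\<^sup>2 = real k - 1" using k3 by (simp add: branch_root_def)
    finally show ?thesis .
  qed
  have "(\<Sum>e<k. (cmod (lift_to_tree k \<phi> W (g, e)))\<^sup>2) =
      (\<Sum>e<k. if e = c then (1 / real k) * (cmod (W (Suc n, True)))\<^sup>2 / (real k - 1) ^ n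
               else (1 / real k) * (cmod (W (Suc n, False)))\<^sup>2 / (real k - 1) ^ Suc n)"
    using gv lw by (intro sum.cong refl) (simp add: g lift_to_tree_Cons norm_mult norm_divide
        power_mult_distrib power_divide nphi nR del: power_Suc)
  also have "\<dots> = ((cmod (W (Suc n, True)))\<^sup>2 + (cmod (W (Suc n, False)))\<^sup>2) / (real k * (real k - 1) ^ n)"
    using k3 by (simp add: sum_if_eq_const[OF ck] field_simps of_nat_diff)
  finally show ?thesis .
qed

lemma lift_sphere_prob:
  assumes nphi: "\<And>j. (cmod (\<phi> j))\<^sup>2 = 1 / real k"
  shows "(\<Sum>g\<in>sphere k x. \<Sum>e<k. (cmod (lift_to_tree k \<phi> W (g, e)))\<^sup>2) =
    (if x = 0 then (cmod (W (0, False)))\<^sup>2 else (cmod (W (x, False)))\<^sup>2 + (cmod (W (x, True)))\<^sup>2)"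
proof (cases x)
  case 0
  have "sphere k 0 = {[]}" by (auto simp: sphere_def tree_vertex_def)
  moreover have "(\<Sum>e<k. (cmod (lift_to_tree k \<phi> W ([], e)))\<^sup>2) = (cmod (W (0, False)))\<^sup>2"
    using k3 by (simp add: lift_to_tree_def tree_vertex_def norm_mult power_mult_distrib nphi)
  ultimately show ?thesis using 0 by simp
next
  case (Suc n)
  have "(\<Sum>g\<in>sphere k x. \<Sum>e<k. (cmod (lift_to_tree k \<phi> W (g, e)))\<^sup>2) =
      real (card (sphere k (Suc n))) *
      (((cmod (W (Suc n, True)))\<^sup>2 + (cmod (W (Suc n, False)))\<^sup>2) / (real k * (real k - 1) ^ n))"
    using Suc by (simp add: sphere_def lift_norm_at_vertex[OF _ _ nphi])
  also have "\<dots> = (cmod (W (Suc n, False)))\<^sup>2 + (cmod (W (Suc n, True)))\<^sup>2"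
    using k3 by (simp add: card_sphere_Suc)
  finally show ?thesis using Suc by simp
qed

lemma tree_dist_prob_eq_wall_prob:
  assumes eigen: "\<And>\<tau>. \<tau> < k \<Longrightarrow> (\<Sum>e<k. grover_coef k e \<tau> * \<phi> e) = cis \<gamma> * \<phi> \<tau>"
    and nphi: "\<And>j. (cmod (\<phi> j))\<^sup>2 = 1 / real k"
  shows "tree_dist_prob k \<phi> t x = wall_prob k \<gamma> t x"
  using lift_sphere_prob[OF nphi, where x = x and W = "wall_state k \<gamma> t"]
  by (simp add: tree_dist_prob_def wall_prob_def sphere_def grover_state_eq_lift[OF eigen])

end

theorem mainTheorem2:
  fixes \<kappa> t x :: nat
  assumes "\<kappa> \<ge> 3"
  shows "tree_dist_prob \<kappa> (phiU \<kappa>) t x = wall_prob \<kappa> 0 t x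
       \<and> tree_dist_prob \<kappa> (phiWU \<kappa>) t x = wall_prob \<kappa> pi t x"
proof
  show "tree_dist_prob \<kappa> (phiU \<kappa>) t x = wall_prob \<kappa> 0 t x"
    using assms by (intro tree_dist_prob_eq_wall_prob phiU_coin_eigen phiU_norm)
  show "tree_dist_prob \<kappa> (phiWU \<kappa>) t x = wall_prob \<kappa> pi t x"
    using assms by (intro tree_dist_prob_eq_wall_prob phiWU_coin_eigen phiWU_norm)
qed

end
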